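(* Let $(V,\mathrm{dist})$ be a metric space in which every nonzero distance lies in $[1,\Delta]$, let $P$ be a stream (sequence) of $n$ points of $V$, and let $\epsilon\in(0,1/4)$. Define $f$ on finite multisets $S$ of points by $f(S):=\mathrm{MaxCut}(S)+|S|\cdot\epsilon/n$. Then $f$ is $(\epsilon,\tfrac{1}{64}\epsilon)$-smooth.
   Context: Multisets/sequences of points: for $S,T$, $\mathrm{cut}(S,T):=\sum_{x\in S}\sum_{y\in T}\mathrm{dist}(x,y)$ and $\mathrm{MaxCut}(S):=\max_{T\subseteq S}\mathrm{cut}(T,S\setminus T)$. For sequences $A,B$, $B\subseteq_r A$ means $B$ is a prefix of $A$ (in the stream order). A function $f$ is $(\alpha,\beta)$-smooth if for every $A$ (a contiguous portion of the stream): (1) $f(A)\ge0$; (2) $f(A)\ge f(B)$ whenever $B\subseteq_r A$; (3) $f(A)\le\mathrm{poly}(|A|)\cdot\Delta$; (4) $0<\beta\le\alpha<1$, and whenever $B\subseteq_r A$ and $(1-\beta)f(A)\le f(B)$, then $(1-\alpha)f(A\cup C)\le f(B\cup C)$ for every $C\subseteq V$. *)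

theory Defs
  imports Complex_Main "HOL-Library.Multiset" "HOL-Library.Sublist"
    "HOL-Computational_Algebra.Polynomial"
begin

definition cut :: "'a::metric_space multiset \<Rightarrow> 'a multiset \<Rightarrow> real" where
  "cut S T = (\<Sum>x\<in>#S. \<Sum>y\<in>#T. dist x y)"

definition MaxCut :: "'a::metric_space multiset \<Rightarrow> real" where
  "MaxCut S = Max {cut T (S - T) | T. T \<subseteq># S}"

definition fcut :: "real \<Rightarrow> nat \<Rightarrow> 'a::metric_space multiset \<Rightarrow> real" where
  "fcut eps n S = MaxCut S + real (size S) * eps / real n"

text \<open>Contiguous portions of the stream are the sublists (infixes) of P; B \<subseteq>_r A is
  'prefix B A'; A \<union> C is multiset union.\<close>
definition smooth ::
  "('a multiset \<Rightarrow> real) \<Rightarrow> 'a list \<Rightarrow> real \<Rightarrow> real \<Rightarrow> real \<Rightarrow> bool" where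
  "smooth f P Delta \<alpha> \<beta> \<longleftrightarrow>
     (\<forall>A. sublist A P \<longrightarrow> 0 \<le> f (mset A)) \<and>
     (\<forall>A B. sublist A P \<longrightarrow> prefix B A \<longrightarrow> f (mset B) \<le> f (mset A)) \<and>
     (\<exists>p :: real poly. \<forall>A. sublist A P \<longrightarrow> f (mset A) \<le> poly p (real (length A)) * Delta) \<and>
     0 < \<beta> \<and> \<beta> \<le> \<alpha> \<and> \<alpha> < 1 \<and>
     (\<forall>A B C. sublist A P \<longrightarrow> prefix B A \<longrightarrow> (1 - \<beta>) * f (mset A) \<le> f (mset B) \<longrightarrow>
        (1 - \<alpha>) * f (mset A + C) \<le> f (mset B + C))"

end

theory Submission
  imports Defs
begin

text \<open>
  MaxCut is superadditive up to half the cross cut and subadditive up to the full cross cut,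
  and by the triangle inequality a cut between two multisets can be charged, with size weights,
  to the cuts through a third one. Write \<open>f S = MaxCut S + e |S|\<close> with \<open>e = \<epsilon>/n > 0\<close> and
  \<open>b = \<epsilon>/64\<close>, and let \<open>A = B + D\<close> with \<open>(1 - b) f A \<le> f B\<close>. Superadditivity turns the small
  increment \<open>f A - f B\<close> into \<open>MaxCut D + cut B D + e |D| \<le> 2 b f A\<close>; charging \<open>cut B B\<close> to
  \<open>cut B D\<close> then gives \<open>|D| \<le> 3 b |B|\<close> (this is where \<open>e > 0\<close> is needed: it keeps \<open>f A\<close>
  positive). For any \<open>C\<close>, subadditivity bounds \<open>f (A + C) - f (B + C)\<close> by that increment plus
  \<open>cut D C\<close>, and charging \<open>cut D C\<close> to \<open>cut B D\<close> and \<open>cut B C\<close> bounds it by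
  \<open>11 b f (A + C)\<close>, so the loss is at most \<open>13 b f (A + C) \<le> \<epsilon> f (A + C)\<close>.
\<close>

lemma cut_add_left [simp]: "cut (A + B) C = cut A C + cut B C"
  by (simp add: cut_def)

lemma cut_add_right [simp]: "cut A (B + C) = cut A B + cut A C"
  by (simp add: cut_def sum_mset.distrib)

lemma cut_commute: "cut A B = cut B A"
  unfolding cut_def by (subst sum_mset.swap) (simp add: dist_commute)

lemma cut_nonneg: "0 \<le> cut A B"
proof -
  have "0 \<le> (\<Sum>y\<in>#B. dist x y)" for x
    by (induction B) auto
  then show ?thesis
    unfolding cut_def by (induction A) (auto intro: add_nonneg_nonneg)
qed

lemma cut_triangle:
  "real (size Y) * cut X Z \<le> real (size Z) * cut X Y + real (size X) * cut Y Z"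
proof -
  have "real (size Y) * cut X Z = (\<Sum>y\<in>#Y. \<Sum>x\<in>#X. \<Sum>z\<in>#Z. dist x z)"
    unfolding cut_def by simp
  also have "\<dots> \<le> (\<Sum>y\<in>#Y. \<Sum>x\<in>#X. \<Sum>z\<in>#Z. dist y x + dist y z)"
    by (intro sum_mset_mono) (metis dist_commute dist_triangle)
  also have "\<dots> = real (size Z) * cut Y X + real (size X) * cut Y Z"
    by (simp add: cut_def sum_mset.distrib sum_mset_distrib_left)
  finally show ?thesis
    by (simp add: cut_commute)
qed

lemma cut_le_size_mult:
  fixes S T :: "'a::metric_space multiset"
  assumes "\<And>x y :: 'a. dist x y \<le> Delta"
  shows "cut S T \<le> real (size S) * real (size T) * Delta"
proof -
  have "cut S T \<le> (\<Sum>x\<in>#S. \<Sum>y\<in>#T. Delta)"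
    unfolding cut_def by (intro sum_mset_mono) (use assms in blast)
  then show ?thesis
    by simp
qed

lemma finite_submultisets: "finite {T. T \<subseteq># S}"
proof (rule finite_subset)
  show "{T. T \<subseteq># S} \<subseteq> (\<Union>k\<le>size S. multisets_of_size (set_mset S) k)"
    by (auto simp: multisets_of_size_def dest: mset_subset_eqD size_mset_mono)
qed auto

lemma cut_le_MaxCut: "cut T U \<le> MaxCut (T + U)"
proof -
  have "finite ((\<lambda>T'. cut T' (T + U - T')) ` {T'. T' \<subseteq># T + U})"
    using finite_submultisets by blast
  then show ?thesis
    unfolding MaxCut_def setcompr_eq_image by (rule Max_ge) (rule rev_image_eqI[of T], auto)
qed

lemma MaxCut_attained:
  obtains T U where "S = T + U" "MaxCut S = cut T U"
proof -
  have "MaxCut S \<in> (\<lambda>T. cut T (S - T)) ` {T. T \<subseteq># S}"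
    unfolding MaxCut_def setcompr_eq_image
    by (rule Max_in) (use finite_submultisets in auto)
  then obtain T where "T \<subseteq># S" "MaxCut S = cut T (S - T)"
    by blast
  then show ?thesis
    using that[of T "S - T"] by simp
qed

lemma MaxCut_nonneg: "0 \<le> MaxCut S"
  using cut_le_MaxCut[of "{#}" S] by (simp add: cut_def)

lemma MaxCut_le_half_cut_self: "MaxCut S \<le> cut S S / 2"
proof -
  obtain T U where "S = T + U" "MaxCut S = cut T U"
    by (rule MaxCut_attained)
  then show ?thesis
    using cut_nonneg[of T T] cut_nonneg[of U U] cut_commute[of U T] by simp
qed

lemma add_eq_add_decompose:
  fixes T U S X :: "'a multiset"
  assumes "T + U = S + X"
  obtains T1 U1 T2 U2 where "S = T1 + U1" "X = T2 + U2" "T = T1 + T2" "U = U1 + U2"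
proof -
  let ?T1 = "T \<inter># S" and ?T2 = "T - T \<inter># S"
  have eq: "count T x + count U x = count S x + count X x" for x
    using assms by (metis count_union)
  have "count X x = count (?T2 + (X - ?T2)) x" "count U x = count (S - ?T1 + (X - ?T2)) x" for x
    using eq[of x] by auto
  then have "X = ?T2 + (X - ?T2)" "U = (S - ?T1) + (X - ?T2)"
    by (simp_all only: multiset_eqI)
  moreover have "S = ?T1 + (S - ?T1)" "T = ?T1 + ?T2"
    by (simp_all add: multiset_eq_iff min_def)
  ultimately show ?thesis
    using that by blast
qed

lemma MaxCut_superadditive: "MaxCut S + MaxCut X + cut S X / 2 \<le> MaxCut (S + X)"
proof -
  obtain T1 U1 where S: "S = T1 + U1" "MaxCut S = cut T1 U1"
    by (rule MaxCut_attained)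
  obtain T2 U2 where X: "X = T2 + U2" "MaxCut X = cut T2 U2"
    by (rule MaxCut_attained)
  have "S + X = (T1 + T2) + (U1 + U2)"
    using S X by (simp add: ac_simps)
  then have cut1: "cut (T1 + T2) (U1 + U2) \<le> MaxCut (S + X)"
    by (simp only: cut_le_MaxCut)
  have "S + X = (T1 + U2) + (U1 + T2)"
    using S X by (simp add: ac_simps)
  then have cut2: "cut (T1 + U2) (U1 + T2) \<le> MaxCut (S + X)"
    by (simp only: cut_le_MaxCut)
  have "cut (T1 + T2) (U1 + U2) + cut (T1 + U2) (U1 + T2)
      = 2 * cut T1 U1 + 2 * cut T2 U2 + cut S X"
    using S X by (simp add: cut_commute[of T2 U1] cut_commute[of U2 U1] cut_commute[of U2 T2])
  with cut1 cut2 S(2) X(2) show ?thesis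
    by linarith
qed

lemma MaxCut_subadditive: "MaxCut (S + X) \<le> MaxCut S + MaxCut X + cut S X"
proof -
  obtain T U where TU: "S + X = T + U" "MaxCut (S + X) = cut T U"
    by (rule MaxCut_attained)
  then obtain T1 U1 T2 U2 where parts: "S = T1 + U1" "X = T2 + U2" "T = T1 + T2" "U = U1 + U2"
    by (metis add_eq_add_decompose)
  have "MaxCut (S + X) = cut T1 U1 + cut T2 U2 + cut T1 U2 + cut U1 T2"
    using TU parts by (simp add: cut_commute[of T2 U1])
  also have "\<dots> \<le> MaxCut S + MaxCut X + cut S X"
    using parts cut_le_MaxCut[of T1 U1] cut_le_MaxCut[of T2 U2]
      cut_nonneg[of T1 T2] cut_nonneg[of U1 U2] by simp
  finally show ?thesis .
qed

lemma MaxCut_mono: "MaxCut S \<le> MaxCut (S + X)"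
  using MaxCut_superadditive[of S X] MaxCut_nonneg[of X] cut_nonneg[of S X] by linarith

lemma cut_le_twice_MaxCut: "cut S X \<le> 2 * MaxCut (S + X)"
  using MaxCut_superadditive[of S X] MaxCut_nonneg[of S] MaxCut_nonneg[of X] by linarith

definition MaxCut_plus_size :: "real \<Rightarrow> 'a::metric_space multiset \<Rightarrow> real" where
  "MaxCut_plus_size e S = MaxCut S + real (size S) * e"

lemma fcut_eq_MaxCut_plus_size: "fcut \<epsilon> n = MaxCut_plus_size (\<epsilon> / real n)"
  by (simp add: fun_eq_iff fcut_def MaxCut_plus_size_def)

lemma MaxCut_plus_size_nonneg: "0 \<le> e \<Longrightarrow> 0 \<le> MaxCut_plus_size e S"
  by (simp add: MaxCut_plus_size_def MaxCut_nonneg)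

lemma MaxCut_plus_size_mono: "0 \<le> e \<Longrightarrow> MaxCut_plus_size e S \<le> MaxCut_plus_size e (S + X)"
  using MaxCut_mono[of S X] by (simp add: MaxCut_plus_size_def add_mono mult_right_mono)

lemma MaxCut_plus_size_add_lower:
  "MaxCut_plus_size e B + MaxCut D + cut B D / 2 + real (size D) * e \<le> MaxCut_plus_size e (B + D)"
  using MaxCut_superadditive[of B D] by (simp add: MaxCut_plus_size_def algebra_simps)

lemma MaxCut_plus_size_add_upper:
  "MaxCut_plus_size e (B + D + C)
     \<le> MaxCut_plus_size e (B + C) + MaxCut D + cut B D + cut D C + real (size D) * e"
proof -
  have "MaxCut (B + D + C) \<le> MaxCut (B + C) + MaxCut D + cut (B + C) D"
    using MaxCut_subadditive[of "B + C" D] by (simp add: ac_simps)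
  then show ?thesis
    by (simp add: MaxCut_plus_size_def cut_commute[of C D] algebra_simps)
qed

lemma size_mult_MaxCut_plus_size_le:
  assumes "0 \<le> e"
  shows "real (size D) * MaxCut_plus_size e B \<le> real (size B) * (cut B D + real (size D) * e)"
proof -
  have "real (size D) * cut B B \<le> real (size B) * cut B D + real (size B) * cut D B"
    by (rule cut_triangle)
  then have "real (size D) * cut B B / 2 \<le> real (size B) * cut B D"
    unfolding cut_commute[of D B] by linarith
  moreover have "real (size D) * MaxCut B \<le> real (size D) * cut B B / 2"
    using mult_left_mono[OF MaxCut_le_half_cut_self, of "real (size D)" B] by simp
  ultimately show ?thesis
    by (simp add: MaxCut_plus_size_def algebra_simps)
qed

lemma cut_plus_size_le_twice_MaxCut_plus_size:
  assumes "0 \<le> e"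
  shows "cut S X + real (size X) * e \<le> 2 * MaxCut_plus_size e (S + X)"
proof -
  have "0 \<le> real (size S) * e" "0 \<le> real (size X) * e"
    using assms by simp_all
  then show ?thesis
    using cut_le_twice_MaxCut[of S X] by (simp add: MaxCut_plus_size_def algebra_simps)
qed

lemma MaxCut_plus_size_increment_le:
  assumes e: "0 \<le> e"
    and close: "(1 - b) * MaxCut_plus_size e (B + D) \<le> MaxCut_plus_size e B"
  shows "MaxCut D + cut B D + real (size D) * e \<le> 2 * b * MaxCut_plus_size e (B + D)"
proof -
  have "0 \<le> MaxCut D" "0 \<le> real (size D) * e"
    using e by (simp_all add: MaxCut_nonneg)
  then have "MaxCut D + cut B D + real (size D) * e
      \<le> 2 * (MaxCut_plus_size e (B + D) - MaxCut_plus_size e B)"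
    using MaxCut_plus_size_add_lower[of e B D] by argo
  also have "\<dots> \<le> 2 * b * MaxCut_plus_size e (B + D)"
    using close by (simp add: algebra_simps)
  finally show ?thesis .
qed

lemma size_increment_le:
  assumes e: "0 < e" and b: "0 \<le> b" "b \<le> 1/3"
    and close: "(1 - b) * MaxCut_plus_size e (B + D) \<le> MaxCut_plus_size e B"
  shows "real (size D) \<le> 3 * b * real (size B)"
proof (cases "B + D = {#}")
  case True
  then show ?thesis
    by simp
next
  case False
  let ?g = "MaxCut_plus_size e"
  have "1 \<le> size (B + D)"
    using False by (simp add: Suc_le_eq nonempty_has_size)
  then have "e \<le> real (size (B + D)) * e"
    using mult_right_mono[of 1 "real (size (B + D))" e] e by simp
  then have gA_pos: "0 < ?g (B + D)"
    using e MaxCut_nonneg[of "B + D"] unfolding MaxCut_plus_size_def by linarith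
  have cut_BD: "cut B D + real (size D) * e \<le> 2 * b * ?g (B + D)"
    using MaxCut_plus_size_increment_le[OF _ close] MaxCut_nonneg[of D] e by simp
  have "real (size D) * ((1 - b) * ?g (B + D)) \<le> real (size D) * ?g B"
    using close by (simp add: mult_left_mono)
  also have "\<dots> \<le> real (size B) * (cut B D + real (size D) * e)"
    using e by (simp add: size_mult_MaxCut_plus_size_le)
  also have "\<dots> \<le> real (size B) * (2 * b * ?g (B + D))"
    using cut_BD by (simp add: mult_left_mono)
  finally have "(real (size D) * (1 - b)) * ?g (B + D) \<le> (2 * b * real (size B)) * ?g (B + D)"
    by (simp add: algebra_simps)
  then have "real (size D) * (1 - b) \<le> 2 * b * real (size B)"
    using gA_pos by simp
  also have "\<dots> \<le> (3 * b * real (size B)) * (1 - b)"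
  proof -
    have "(b * real (size B)) * 2 \<le> (b * real (size B)) * (3 * (1 - b))"
      using b by (intro mult_left_mono) auto
    then show ?thesis
      by (simp add: algebra_simps)
  qed
  finally show ?thesis
    using b by simp
qed

lemma cut_increment_le:
  assumes e: "0 \<le> e" and b: "0 \<le> b" "b \<le> 1/12"
    and size_D: "real (size D) \<le> 3 * b * real (size B)"
    and cut_BD: "cut B D \<le> 2 * b * MaxCut_plus_size e (B + D)"
  shows "cut D C \<le> 11 * b * MaxCut_plus_size e (B + D + C)"
proof (cases "B = {#}")
  case True
  with size_D have "D = {#}"
    by simp
  then show ?thesis
    using e b by (simp add: cut_def MaxCut_plus_size_nonneg)
next
  case False
  let ?g = "MaxCut_plus_size e"
  let ?gAC = "?g (B + D + C)"
  have gAC_nonneg: "0 \<le> ?gAC"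
    using e by (simp add: MaxCut_plus_size_nonneg)
  have "real (size C) * cut B D \<le> real (size C) * (2 * b * ?g (B + D))"
    using cut_BD by (simp add: mult_left_mono)
  also have "\<dots> = 2 * b * (real (size C) * ?g (B + D))"
    by simp
  also have "\<dots> \<le> 2 * b * (real (size (B + D)) * (cut (B + D) C + real (size C) * e))"
    using size_mult_MaxCut_plus_size_le[of e C "B + D"] e b by (simp add: mult_left_mono)
  also have "\<dots> \<le> 2 * b * (real (size (B + D)) * (2 * ?gAC))"
    using cut_plus_size_le_twice_MaxCut_plus_size[of e "B + D" C] e b
    by (intro mult_left_mono) simp_all
  finally have C_term: "real (size C) * cut B D \<le> 4 * b * (real (size B) + real (size D)) * ?gAC"
    by (simp add: algebra_simps)
  have "cut B C \<le> cut B C + real (size C) * e"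
    using e by simp
  also have "\<dots> \<le> 2 * ?gAC"
    using cut_plus_size_le_twice_MaxCut_plus_size[of e B C] MaxCut_plus_size_mono[of e "B + C" D] e
    by (simp add: ac_simps)
  finally have D_term: "real (size D) * cut B C \<le> 3 * b * real (size B) * (2 * ?gAC)"
    using size_D cut_nonneg[of B C] by (intro mult_mono) auto
  have "real (size B) * cut D C \<le> real (size C) * cut B D + real (size D) * cut B C"
    using cut_triangle[where X = D and Y = B and Z = C] by (simp add: cut_commute[of D B])
  also have "\<dots> \<le> (4 * b * (real (size B) + real (size D)) + 6 * b * real (size B)) * ?gAC"
    using C_term D_term by (simp add: algebra_simps)
  also have "\<dots> \<le> (4 * b * (real (size B) + 3 * b * real (size B)) + 6 * b * real (size B)) * ?gAC"
    using size_D b gAC_nonneg by (intro mult_right_mono add_right_mono mult_left_mono add_left_mono) auto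
  also have "\<dots> = real (size B) * ((10 * b + 12 * b * b) * ?gAC)"
    by (simp add: algebra_simps)
  also have "\<dots> \<le> real (size B) * (11 * b * ?gAC)"
  proof -
    have "12 * b * b \<le> 1 * b"
      using b by (intro mult_right_mono) auto
    then show ?thesis
      using gAC_nonneg by (intro mult_left_mono mult_right_mono) auto
  qed
  finally have "real (size B) * cut D C \<le> real (size B) * (11 * b * ?gAC)" .
  moreover have "0 < real (size B)"
    using False by (simp add: nonempty_has_size)
  ultimately show ?thesis
    by simp
qed

lemma MaxCut_plus_size_smooth_step:
  assumes e: "0 < e" and eps: "0 < \<epsilon>" "\<epsilon> \<le> 1"
    and close: "(1 - \<epsilon> / 64) * MaxCut_plus_size e (B + D) \<le> MaxCut_plus_size e B"
  shows "(1 - \<epsilon>) * MaxCut_plus_size e (B + D + C) \<le> MaxCut_plus_size e (B + C)"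
proof -
  define b where "b = \<epsilon> / 64"
  let ?g = "MaxCut_plus_size e"
  let ?gAC = "?g (B + D + C)"
  have b: "0 < b" "b \<le> 1/64"
    using eps by (simp_all add: b_def)
  have close_b: "(1 - b) * ?g (B + D) \<le> ?g B"
    using close by (simp add: b_def)
  have increment: "MaxCut D + cut B D + real (size D) * e \<le> 2 * b * ?g (B + D)"
    using MaxCut_plus_size_increment_le[OF _ close_b] e by simp
  have "0 \<le> MaxCut D" "0 \<le> real (size D) * e"
    using e by (simp_all add: MaxCut_nonneg)
  with increment have "cut B D \<le> 2 * b * ?g (B + D)"
    by linarith
  moreover have "real (size D) \<le> 3 * b * real (size B)"
    using size_increment_le[OF e _ _ close_b] b by simp
  ultimately have cut_DC: "cut D C \<le> 11 * b * ?gAC"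
    using cut_increment_le[of e b D B] e b by simp
  have "2 * b * ?g (B + D) \<le> 2 * b * ?gAC"
    using MaxCut_plus_size_mono[of e "B + D" C] e b by simp
  with increment cut_DC have "?gAC - ?g (B + C) \<le> 13 * b * ?gAC"
    using MaxCut_plus_size_add_upper[of e B D C] by linarith
  also have "\<dots> \<le> \<epsilon> * ?gAC"
    using MaxCut_plus_size_nonneg[of e "B + D + C"] e eps by (simp add: b_def mult_right_mono)
  finally show ?thesis
    by (simp add: algebra_simps)
qed

lemma MaxCut_plus_size_le_square:
  fixes S :: "'a::metric_space multiset"
  assumes dist_le: "\<And>x y :: 'a. dist x y \<le> Delta" and size_e: "real (size S) * e \<le> Delta"
  shows "MaxCut_plus_size e S \<le> (1 + real (size S) ^ 2) * Delta"
proof -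
  have "0 \<le> Delta"
    by (rule order_trans[OF zero_le_dist dist_le])
  then have "0 \<le> real (size S) ^ 2 * Delta"
    by simp
  then have "MaxCut S \<le> real (size S) ^ 2 * Delta"
    using MaxCut_le_half_cut_self[of S] cut_le_size_mult[OF dist_le, of S S]
    by (simp add: power2_eq_square)
  with size_e show ?thesis
    by (simp add: MaxCut_plus_size_def algebra_simps)
qed

theorem lemma4p4:
  fixes P :: "'a::metric_space list" and n :: nat and \<epsilon> Delta :: real
  assumes dist_range: "\<And>x y :: 'a. x \<noteq> y \<Longrightarrow> 1 \<le> dist x y \<and> dist x y \<le> Delta"
    and Delta_ge: "1 \<le> Delta"
    and len: "length P = n"
    and eps: "0 < \<epsilon>" "\<epsilon> < 1/4"
  shows "smooth (fcut \<epsilon> n) P Delta \<epsilon> (\<epsilon> / 64)"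
proof -
  define e where "e = \<epsilon> / real n"
  let ?g = "MaxCut_plus_size e"
  have f: "fcut \<epsilon> n = ?g"
    by (simp add: e_def fcut_eq_MaxCut_plus_size)
  have e: "0 \<le> e"
    using eps by (simp add: e_def)
  have dist_le: "dist x y \<le> Delta" for x y :: 'a
    using dist_range[of x y] Delta_ge by (cases "x = y") auto
  have size_e: "real (length A) * e \<le> Delta" if "sublist A P" for A
  proof -
    have "real (length A) * e \<le> real n * e"
      using sublist_length_le[OF that] len e by (simp add: mult_right_mono)
    also have "\<dots> \<le> Delta"
      using eps Delta_ge by (cases "n = 0") (simp_all add: e_def)
    finally show ?thesis .
  qed
  have step: "(1 - \<epsilon>) * ?g (mset A + C) \<le> ?g (mset B + C)"
    if "sublist A P" "prefix B A" "(1 - \<epsilon> / 64) * ?g (mset A) \<le> ?g (mset B)" for A B C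
  proof (cases "n = 0")
    case True
    with that len have "B = A"
      by simp
    then show ?thesis
      using MaxCut_plus_size_nonneg[OF e, of "mset A + C"] eps by (simp add: mult_left_le_one_le)
  next
    case False
    then have "0 < e"
      using eps by (simp add: e_def)
    obtain D where "A = B @ D"
      using \<open>prefix B A\<close> by (auto elim: prefixE)
    with \<open>0 < e\<close> show ?thesis
      using MaxCut_plus_size_smooth_step[of e \<epsilon> "mset B" "mset D" C] that(3) eps by simp
  qed
  show ?thesis
    unfolding smooth_def f
    using MaxCut_plus_size_nonneg[OF e] MaxCut_plus_size_mono[OF e] step eps
  proof (auto elim!: prefixE intro!: exI[of _ "[:1, 0, 1:]"])
    fix A
    assume "sublist A P"
    then show "?g (mset A) \<le> (1 + real (length A) * real (length A)) * Delta"
      using MaxCut_plus_size_le_square[OF dist_le, of "mset A" e] size_e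
      by (simp add: power2_eq_square)
  qed
qed

end
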